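(* Let $\Gamma=(V,E)$ and $\Gamma'=(V',E')$ be layered graphs with unique minimal vertices such that $\Gamma\sim_A\Gamma'$. Then $|V_i|=|V_i'|$ for all $i\in\mathbb N$.
   Context: A layered graph is a finite directed graph $\Gamma=(V,E)$ with $V=\bigsqcup_{i=0}^{N}V_i$ such that every edge from $V_i$ goes to $V_{i-1}$; $|v|=i$ for $v\in V_i$, $V_+=\bigsqcup_{i\ge1}V_i$, every vertex in $V_+$ has at least one outgoing edge, and unique minimal vertex means $|V_0|=1$. The universal labeling algebra $A(\Gamma)$ is presented as $T(V_+)/R_V$ (free algebra on $V_+$ over a field $\mathbb F$ modulo an ideal $R_V$ which is homogeneous for the polynomial degree). The degree grading of $A(\Gamma)$ is $A(\Gamma)_{[i]}$ = span of images of monomials $v_1\cdots v_i$ ($v_j\in V_+$). The vertex filtration is $A(\Gamma)_i$ = span of images of monomials $v_1\cdots v_j$ with $\sum_k|v_k|\le i$. One writes $\Gamma\sim_A\Gamma'$ if there is an algebra isomorphism $A(\Gamma)\to A(\Gamma')$ preserving both the degree grading and the vertex filtration. *)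

theory Defs
  imports Main
begin

text \<open>A layered graph is given by a finite vertex set V, an edge relation E
  (edges (v,w) go from v to w) and a level function lev, with V_i = {v in V. lev v = i}.\<close>

definition layered_graph :: "'a set \<Rightarrow> ('a \<times> 'a) set \<Rightarrow> ('a \<Rightarrow> nat) \<Rightarrow> bool" where
  "layered_graph V E lev \<longleftrightarrow>
     finite V \<and> E \<subseteq> V \<times> V \<and>
     (\<forall>(v,w)\<in>E. lev v = Suc (lev w)) \<and>
     (\<forall>v\<in>V. lev v \<ge> 1 \<longrightarrow> (\<exists>w. (v,w) \<in> E))"

definition level :: "'a set \<Rightarrow> ('a \<Rightarrow> nat) \<Rightarrow> nat \<Rightarrow> 'a set" where
  "level V lev i = {v\<in>V. lev v = i}"

definition Vplus :: "'a set \<Rightarrow> ('a \<Rightarrow> nat) \<Rightarrow> 'a set" where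
  "Vplus V lev = {v\<in>V. lev v \<ge> 1}"

definition unique_min :: "'a set \<Rightarrow> ('a \<Rightarrow> nat) \<Rightarrow> bool" where
  "unique_min V lev \<longleftrightarrow> card (level V lev 0) = 1"

text \<open>Noncommutative polynomials: coefficient functions on words.\<close>

type_synonym ('v,'f) ncp = "'v list \<Rightarrow> 'f"

definition nc_in :: "'v set \<Rightarrow> ('v,'f::field) ncp \<Rightarrow> bool" where
  "nc_in X p \<longleftrightarrow> finite {w. p w \<noteq> 0} \<and> (\<forall>w. p w \<noteq> 0 \<longrightarrow> set w \<subseteq> X)"

definition nc_zero :: "('v,'f::field) ncp" where
  "nc_zero = (\<lambda>w. 0)"

definition nc_one :: "('v,'f::field) ncp" where
  "nc_one = (\<lambda>w. if w = [] then 1 else 0)"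

definition nc_var :: "'v \<Rightarrow> ('v,'f::field) ncp" where
  "nc_var x = (\<lambda>w. if w = [x] then 1 else 0)"

definition nc_add :: "('v,'f::field) ncp \<Rightarrow> ('v,'f) ncp \<Rightarrow> ('v,'f) ncp" where
  "nc_add p q = (\<lambda>w. p w + q w)"

definition nc_diff :: "('v,'f::field) ncp \<Rightarrow> ('v,'f) ncp \<Rightarrow> ('v,'f) ncp" where
  "nc_diff p q = (\<lambda>w. p w - q w)"

definition nc_mul :: "('v,'f::field) ncp \<Rightarrow> ('v,'f) ncp \<Rightarrow> ('v,'f) ncp" where
  "nc_mul p q = (\<lambda>w. \<Sum>i\<le>length w. p (take i w) * q (drop i w))"

fun nc_prod :: "('v,'f::field) ncp list \<Rightarrow> ('v,'f) ncp" where
  "nc_prod [] = nc_one"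
| "nc_prod (p # ps) = nc_mul p (nc_prod ps)"

inductive_set nc_ideal :: "'v set \<Rightarrow> ('v,'f::field) ncp set \<Rightarrow> ('v,'f) ncp set"
  for X :: "'v set" and R :: "('v,'f) ncp set" where
  gen: "r \<in> R \<Longrightarrow> r \<in> nc_ideal X R"
| zero: "nc_zero \<in> nc_ideal X R"
| add: "p \<in> nc_ideal X R \<Longrightarrow> q \<in> nc_ideal X R \<Longrightarrow> nc_add p q \<in> nc_ideal X R"
| lmul: "p \<in> nc_ideal X R \<Longrightarrow> nc_in X a \<Longrightarrow> nc_mul a p \<in> nc_ideal X R"
| rmul: "p \<in> nc_ideal X R \<Longrightarrow> nc_in X a \<Longrightarrow> nc_mul p a \<in> nc_ideal X R"

definition nc_subst :: "('v \<Rightarrow> ('u,'f::field) ncp) \<Rightarrow> ('v,'f) ncp \<Rightarrow> ('u,'f) ncp" where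
  "nc_subst g p = (\<lambda>u. \<Sum>w\<in>{w. p w \<noteq> 0}. p w * nc_prod (map g w) u)"

section \<open>The universal labeling algebra A(Gamma) = T(V_+)/R_V\<close>

text \<open>Ordered elementary symmetric functions: esym j [a1,...,ak] is the sum of all
  products a_{i1}...a_{ij} with i1 < ... < ij, so that
  (t - a1)...(t - ak) = sum_j (-1)^j esym j [a1..ak] t^(k-j) for central t.\<close>

fun esym :: "nat \<Rightarrow> ('v,'f::field) ncp list \<Rightarrow> ('v,'f) ncp" where
  "esym 0 as = nc_one"
| "esym (Suc j) [] = nc_zero"
| "esym (Suc j) (a # as) = nc_add (nc_mul a (esym j as)) (esym (Suc j) as)"

definition vgen :: "('a \<Rightarrow> nat) \<Rightarrow> 'a \<Rightarrow> ('a,'f::field) ncp" where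
  "vgen lev x = (if lev x \<ge> 1 then nc_var x else nc_zero)"

definition path_down :: "('a \<times> 'a) set \<Rightarrow> ('a \<Rightarrow> nat) \<Rightarrow> 'a \<Rightarrow> 'a list \<Rightarrow> bool" where
  "path_down E lev v ps \<longleftrightarrow> ps \<noteq> [] \<and> hd ps = v \<and> lev (last ps) = 0 \<and>
     (\<forall>i. Suc i < length ps \<longrightarrow> (ps ! i, ps ! Suc i) \<in> E)"

definition edge_labels :: "('a \<Rightarrow> nat) \<Rightarrow> 'a list \<Rightarrow> ('a,'f::field) ncp list" where
  "edge_labels lev ps = map (\<lambda>i. nc_diff (vgen lev (ps ! i)) (vgen lev (ps ! Suc i)))
                           [0..<length ps - 1]"

text \<open>Relations: for every v and any two paths from v down to level 0, the polynomials
  prod (t - label) agree, i.e. all their coefficients esym j agree.\<close>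

definition rel_gens :: "'a set \<Rightarrow> ('a \<times> 'a) set \<Rightarrow> ('a \<Rightarrow> nat) \<Rightarrow> ('a,'f::field) ncp set" where
  "rel_gens V E lev = {nc_diff (esym j (edge_labels lev p1)) (esym j (edge_labels lev p2)) |
      v p1 p2 j. v \<in> Vplus V lev \<and> path_down E lev v p1 \<and> path_down E lev v p2}"

definition R_V :: "'a set \<Rightarrow> ('a \<times> 'a) set \<Rightarrow> ('a \<Rightarrow> nat) \<Rightarrow> ('a,'f::field) ncp set" where
  "R_V V E lev = nc_ideal (Vplus V lev) (rel_gens V E lev)"

text \<open>Preimages in T(V_+) of the degree component A_[i] and of the filtration piece A_i.\<close>

definition deg_span :: "'a set \<Rightarrow> ('a \<Rightarrow> nat) \<Rightarrow> nat \<Rightarrow> ('a,'f::field) ncp set" where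
  "deg_span V lev i = {p. nc_in (Vplus V lev) p \<and> (\<forall>w. p w \<noteq> 0 \<longrightarrow> length w = i)}"

definition filt_span :: "'a set \<Rightarrow> ('a \<Rightarrow> nat) \<Rightarrow> nat \<Rightarrow> ('a,'f::field) ncp set" where
  "filt_span V lev i = {p. nc_in (Vplus V lev) p \<and> (\<forall>w. p w \<noteq> 0 \<longrightarrow> sum_list (map lev w) \<le> i)}"

text \<open>Gamma ~_A Gamma': an algebra isomorphism A(Gamma) -> A(Gamma') (with inverse)
  preserving the degree grading and the vertex filtration. Homomorphisms
  A(Gamma) -> A(Gamma') are induced by substitutions g of the generators that map
  R_V into R_V'.\<close>

definition sim_A :: "'f::field itself \<Rightarrow> 'a set \<Rightarrow> ('a \<times> 'a) set \<Rightarrow> ('a \<Rightarrow> nat) \<Rightarrow>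
     'b set \<Rightarrow> ('b \<times> 'b) set \<Rightarrow> ('b \<Rightarrow> nat) \<Rightarrow> bool" where
  "sim_A (_::'f itself) V E lev V' E' lev' \<longleftrightarrow>
    (\<exists>(g :: 'a \<Rightarrow> ('b,'f) ncp) (h :: 'b \<Rightarrow> ('a,'f) ncp).
      (\<forall>x\<in>Vplus V lev. nc_in (Vplus V' lev') (g x)) \<and>
      (\<forall>x\<in>Vplus V' lev'. nc_in (Vplus V lev) (h x)) \<and>
      (\<forall>r\<in>R_V V E lev. nc_subst g r \<in> R_V V' E' lev') \<and>
      (\<forall>r\<in>R_V V' E' lev'. nc_subst h r \<in> R_V V E lev) \<and>
      (\<forall>p. nc_in (Vplus V lev) p \<longrightarrow> nc_diff (nc_subst h (nc_subst g p)) p \<in> R_V V E lev) \<and>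
      (\<forall>p. nc_in (Vplus V' lev') p \<longrightarrow> nc_diff (nc_subst g (nc_subst h p)) p \<in> R_V V' E' lev') \<and>
      (\<forall>i. \<forall>p\<in>deg_span V lev i. \<exists>q\<in>deg_span V' lev' i. nc_diff (nc_subst g p) q \<in> R_V V' E' lev') \<and>
      (\<forall>i. \<forall>p\<in>deg_span V' lev' i. \<exists>q\<in>deg_span V lev i. nc_diff (nc_subst h p) q \<in> R_V V E lev) \<and>
      (\<forall>i. \<forall>p\<in>filt_span V lev i. \<exists>q\<in>filt_span V' lev' i. nc_diff (nc_subst g p) q \<in> R_V V' E' lev') \<and>
      (\<forall>i. \<forall>p\<in>filt_span V' lev' i. \<exists>q\<in>filt_span V lev i. nc_diff (nc_subst h p) q \<in> R_V V E lev))"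

end

theory Submission
  imports Defs "HOL-Library.Function_Algebras" "HOL.Vector_Spaces"
begin

text \<open>All relations of \<open>A(\<Gamma>)\<close> have vanishing constant and linear terms: along any path
  from \<open>v\<close> to the minimal vertex the edge labels have no constant term, and their first
  elementary symmetric function telescopes to \<open>y\<^sub>v\<close>. Hence an isomorphism
  \<open>A(\<Gamma>) \<cong> A(\<Gamma>')\<close> given by substitutions \<open>g\<close>, \<open>h\<close> (where \<open>h\<close> has no constant terms because
  it preserves the degree grading) induces on linear terms matrices with
  \<open>lin(g) \<cdot> lin(h) = 1\<close>. Since \<open>g\<close> respects the vertex filtration, the rows of
  \<open>lin(g)\<close> indexed by \<open>V\<^sub>+\<close>-vertices of level \<open>\<le> i\<close> are supported on the corresponding
  vertices of \<open>\<Gamma>'\<close>, and a matrix with a right inverse has no more rows than columns.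
  By symmetry the numbers of vertices in \<open>V\<^sub>1 \<union> \<dots> \<union> V\<^sub>i\<close> agree for every \<open>i\<close>; level \<open>0\<close>
  is handled by the unique minimal vertex.\<close>

lemma sum_fun_apply: "(\<Sum>x\<in>A. f x) y = (\<Sum>x\<in>A. f x y)"
  by (induction A rule: infinite_finite_induct) auto

global_interpretation fun_space: vector_space "\<lambda>(c::'f::field) (v::'b \<Rightarrow> 'f) y. c * v y"
  by unfold_locales (auto simp: fun_eq_iff algebra_simps)

lemma inj_on_rows_of_right_invertible:
  fixes C :: "'a \<Rightarrow> 'b \<Rightarrow> 'f::field" and D :: "'b \<Rightarrow> 'a \<Rightarrow> 'f"
  assumes inv: "\<And>x z. x \<in> A \<Longrightarrow> z \<in> A \<Longrightarrow> (\<Sum>y\<in>B. C x y * D y z) = (if x = z then 1 else 0)"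
  shows "inj_on C A"
proof (rule inj_onI)
  fix x x' assume x: "x \<in> A" and x': "x' \<in> A" and "C x = C x'"
  then have "(\<Sum>y\<in>B. C x y * D y x) = (\<Sum>y\<in>B. C x' y * D y x)" by simp
  then show "x = x'" using inv[OF x x] inv[OF x' x] by (auto split: if_splits)
qed

lemma independent_rows_of_right_invertible:
  fixes C :: "'a \<Rightarrow> 'b \<Rightarrow> 'f::field" and D :: "'b \<Rightarrow> 'a \<Rightarrow> 'f"
  assumes inv: "\<And>x z. x \<in> A \<Longrightarrow> z \<in> A \<Longrightarrow> (\<Sum>y\<in>B. C x y * D y z) = (if x = z then 1 else 0)"
  shows "fun_space.independent (C ` A)"
proof
  assume "fun_space.dependent (C ` A)"
  then obtain t u where t: "finite t" "t \<subseteq> C ` A"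
    and comb: "(\<Sum>v\<in>t. (\<lambda>y. u v * v y)) = 0" and nz: "\<exists>v\<in>t. u v \<noteq> 0"
    unfolding fun_space.dependent_explicit by blast
  obtain A0 where A0: "A0 \<subseteq> A" "t = C ` A0" using t(2) by (meson subset_imageE)
  have inj0: "inj_on C A0"
    using inj_on_rows_of_right_invertible[OF inv] A0(1) inj_on_subset by blast
  have fA0: "finite A0" using t(1) A0(2) inj0 finite_image_iff by blast
  from nz A0 obtain z where z: "z \<in> A0" "u (C z) \<noteq> 0" by auto
  have comb': "(\<Sum>x\<in>A0. u (C x) * C x y) = 0" for y
    using fun_cong[OF comb, of y] A0(2) by (simp add: sum_fun_apply sum.reindex[OF inj0])
  have "0 = (\<Sum>y\<in>B. (\<Sum>x\<in>A0. u (C x) * C x y) * D y z)" using comb' by simp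
  also have "\<dots> = (\<Sum>x\<in>A0. u (C x) * (\<Sum>y\<in>B. C x y * D y z))"
    by (simp add: sum_distrib_left sum_distrib_right sum.swap[of _ B] mult.assoc)
  also have "\<dots> = (\<Sum>x\<in>A0. u (C x) * (if x = z then 1 else 0))"
    using A0(1) z(1) inv by (intro sum.cong) (auto simp: subset_iff)
  also have "\<dots> = u (C z)" using z(1) fA0 by (simp add: if_distrib cong: if_cong)
  finally show False using z(2) by simp
qed

lemma card_le_of_right_inverse:
  fixes C :: "'a \<Rightarrow> 'b \<Rightarrow> 'f::field" and D :: "'b \<Rightarrow> 'a \<Rightarrow> 'f"
  assumes fB: "finite B"
    and supp: "\<And>x y. x \<in> A \<Longrightarrow> C x y \<noteq> 0 \<Longrightarrow> y \<in> B"
    and inv: "\<And>x z. x \<in> A \<Longrightarrow> z \<in> A \<Longrightarrow> (\<Sum>y\<in>B. C x y * D y z) = (if x = z then 1 else 0)"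
  shows "card A \<le> card B"
proof -
  define e where "e = (\<lambda>y::'b. \<lambda>b. if b = y then (1::'f) else 0)"
  have span: "C ` A \<subseteq> fun_space.span (e ` B)"
  proof
    fix v assume "v \<in> C ` A"
    then obtain x where x: "x \<in> A" and v: "v = C x" by auto
    have "v = (\<Sum>y\<in>B. (\<lambda>b. C x y * e y b))"
    proof
      fix b
      have "(\<Sum>y\<in>B. (\<lambda>b. C x y * e y b)) b = (if b \<in> B then C x b else 0)"
        using fB by (simp add: sum_fun_apply e_def if_distrib cong: if_cong)
      then show "v b = (\<Sum>y\<in>B. (\<lambda>b. C x y * e y b)) b" using supp[OF x, of b] v by auto
    qed
    also have "\<dots> \<in> fun_space.span (e ` B)"
      by (intro fun_space.span_sum fun_space.span_scale fun_space.span_base) auto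
    finally show "v \<in> fun_space.span (e ` B)" .
  qed
  have "card (C ` A) \<le> card (e ` B)"
    using fun_space.independent_span_bound[OF finite_imageI[OF fB]
        independent_rows_of_right_invertible[OF inv] span] ..
  also have "\<dots> \<le> card B" by (rule card_image_le[OF fB])
  finally show ?thesis using card_image[OF inj_on_rows_of_right_invertible[OF inv]] by simp
qed

definition order_ge_two :: "('v,'f::field) ncp \<Rightarrow> bool" where
  "order_ge_two p \<longleftrightarrow> (\<forall>w. length w \<le> 1 \<longrightarrow> p w = 0)"

lemma length_le_one_cases: "length w \<le> Suc 0 \<Longrightarrow> w = [] \<or> (\<exists>x. w = [x])"
  by (cases w) auto

lemma nc_mul_Nil: "nc_mul p q [] = p [] * q []"
  by (simp add: nc_mul_def)

lemma nc_mul_singleton: "nc_mul p q [x] = p [] * q [x] + p [x] * q []"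
  by (simp add: nc_mul_def)

lemma nc_mul_one_right [simp]: "nc_mul p nc_one = p"
proof
  fix w
  have "nc_mul p nc_one w = (\<Sum>i\<le>length w. if i = length w then p w else 0)"
    unfolding nc_mul_def nc_one_def by (intro sum.cong) auto
  then show "nc_mul p nc_one w = p w" by simp
qed

lemma order_ge_two_nc_ideal:
  assumes "r \<in> nc_ideal X R" and "\<And>r. r \<in> R \<Longrightarrow> order_ge_two r"
  shows "order_ge_two r"
  using assms
proof (induction rule: nc_ideal.induct)
  case (lmul p a)
  then show ?case unfolding order_ge_two_def
    by (auto dest!: length_le_one_cases simp: nc_mul_Nil nc_mul_singleton)
next
  case (rmul p a)
  then show ?case unfolding order_ge_two_def
    by (auto dest!: length_le_one_cases simp: nc_mul_Nil nc_mul_singleton)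
qed (auto simp: order_ge_two_def nc_zero_def nc_add_def)

lemma esym_Suc_Nil: "\<forall>a\<in>set as. a [] = 0 \<Longrightarrow> esym (Suc j) as [] = 0"
  by (induction as arbitrary: j) (auto simp: nc_zero_def nc_add_def nc_mul_Nil)

lemma esym_Suc_Suc_singleton: "\<forall>a\<in>set as. a [] = 0 \<Longrightarrow> esym (Suc (Suc j)) as [x] = 0"
  by (induction as arbitrary: j)
    (auto simp: nc_zero_def nc_add_def nc_mul_singleton esym_Suc_Nil)

lemma esym_one_Cons_singleton: "esym 1 (a # as) [x] = a [x] + esym 1 as [x]"
  by (simp add: nc_add_def)

lemma edge_labels_Cons_Cons:
  "edge_labels lev (a # b # ps) = nc_diff (vgen lev a) (vgen lev b) # edge_labels lev (b # ps)"
proof -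
  have "[0..<length (a # b # ps) - 1] = 0 # map Suc [0..<length (b # ps) - 1]"
    by (simp add: upt_conv_Cons map_Suc_upt del: upt_Suc)
  then show ?thesis unfolding edge_labels_def by simp
qed

lemma edge_labels_no_constant_term: "\<forall>a\<in>set (edge_labels lev ps). a [] = 0"
  by (auto simp: edge_labels_def nc_diff_def vgen_def nc_var_def nc_zero_def)

lemma esym_one_edge_labels_singleton:
  "ps \<noteq> [] \<Longrightarrow>
   (esym 1 (edge_labels lev ps) [x] :: 'f::field) = vgen lev (hd ps) [x] - vgen lev (last ps) [x]"
proof (induction ps rule: induct_list012)
  case (3 a b ps)
  then show ?case
    by (simp only: edge_labels_Cons_Cons esym_one_Cons_singleton) (simp add: nc_diff_def)
qed (simp_all add: edge_labels_def nc_zero_def)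

lemma esym_edge_labels_path_down_low:
  assumes p: "path_down E lev v p" and w: "length w \<le> Suc 0"
  shows "(esym j (edge_labels lev p) w :: 'f::field) =
    (if j = 0 then nc_one w else if j = 1 then vgen lev v w else 0)"
proof -
  have no_const: "\<forall>a\<in>set (edge_labels lev p). (a [] :: 'f) = 0"
    by (rule edge_labels_no_constant_term)
  consider "j = 0" | "j = 1" | k where "j = Suc (Suc k)"
    by (metis One_nat_def not0_implies_Suc)
  then show ?thesis
  proof cases
    case 2
    from w consider "w = []" | x where "w = [x]" using length_le_one_cases by blast
    then show ?thesis
    proof cases
      case 1
      then show ?thesis using esym_Suc_Nil[OF no_const, of 0] \<open>j = 1\<close>
        by (simp add: vgen_def nc_var_def nc_zero_def)
    next
      case (2 x)
      have "p \<noteq> []" "hd p = v" "lev (last p) = 0" using p by (auto simp: path_down_def)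
      then have "(esym 1 (edge_labels lev p) [x] :: 'f) = vgen lev v [x]"
        using esym_one_edge_labels_singleton[of p lev x] by (simp add: vgen_def nc_zero_def)
      then show ?thesis using \<open>j = 1\<close> \<open>w = [x]\<close> by simp
    qed
  next
    case 3
    then show ?thesis using w esym_Suc_Nil[OF no_const] esym_Suc_Suc_singleton[OF no_const]
      by (auto dest: length_le_one_cases)
  qed simp
qed

lemma R_V_low_terms:
  assumes "r \<in> R_V V E lev" and "length w \<le> 1"
  shows "r w = 0"
proof -
  have "order_ge_two r"
    using assms(1) unfolding R_V_def
    by (rule order_ge_two_nc_ideal)
      (auto simp: rel_gens_def order_ge_two_def nc_diff_def esym_edge_labels_path_down_low)
  then show ?thesis using assms(2) by (simp add: order_ge_two_def)
qed

lemma nc_subst_var: "nc_subst g (nc_var x) = g x"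
proof -
  have "{w. nc_var x w \<noteq> (0::'f::field)} = {[x]}" by (auto simp: nc_var_def)
  then show ?thesis by (auto simp: nc_subst_def nc_var_def)
qed

lemma nc_in_var: "x \<in> X \<Longrightarrow> nc_in X (nc_var x)"
  by (auto simp: nc_in_def nc_var_def)

lemma nc_prod_shorter_word:
  assumes "\<forall>p\<in>set ps. p [] = 0" and "length w < length ps"
  shows "nc_prod ps w = 0"
  using assms
proof (induction ps arbitrary: w)
  case (Cons p ps)
  have "p (take i w) * nc_prod ps (drop i w) = 0" if "i \<le> length w" for i
    using Cons that by (cases i) auto
  then show ?case by (auto simp: nc_mul_def intro!: sum.neutral)
qed simp

lemma nc_prod_map_singleton:
  assumes "\<forall>y\<in>set w. h y [] = 0"
  shows "nc_prod (map h w) [z] = (case w of [y] \<Rightarrow> h y [z] | _ \<Rightarrow> 0)"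
proof (cases w)
  case (Cons y w')
  then show ?thesis using assms
    by (cases w') (simp, simp add: nc_prod_shorter_word del: nc_prod.simps)
qed (simp add: nc_one_def)

lemma nc_subst_singleton:
  assumes P: "nc_in X P" and fX: "finite X" and h0: "\<forall>y\<in>X. h y [] = 0"
  shows "nc_subst h P [z] = (\<Sum>y\<in>X. P [y] * h y [z])"
proof -
  define S where "S = {w. P w \<noteq> 0}"
  define f where "f w = P w * (case w of [y] \<Rightarrow> h y [z] | _ \<Rightarrow> 0)" for w
  define T where "T = S \<union> (\<lambda>y. [y]) ` X"
  have fS: "finite S" and SX: "\<And>w. w \<in> S \<Longrightarrow> set w \<subseteq> X"
    using P by (auto simp: nc_in_def S_def)
  have fT: "finite T" using fS fX by (simp add: T_def)
  have X_singleton: "y \<in> X" if "P [y] \<noteq> 0" for y using SX[of "[y]"] that by (simp add: S_def)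
  have "nc_prod (map h w) [z] = (case w of [y] \<Rightarrow> h y [z] | _ \<Rightarrow> 0)" if "w \<in> S" for w
    using SX[OF that] h0 by (intro nc_prod_map_singleton) auto
  then have "nc_subst h P [z] = (\<Sum>w\<in>S. f w)"
    by (simp add: nc_subst_def S_def f_def)
  also have "\<dots> = (\<Sum>w\<in>T. f w)"
    using fT by (intro sum.mono_neutral_left) (auto simp: T_def S_def f_def)
  also have "\<dots> = (\<Sum>w\<in>(\<lambda>y. [y]) ` X. f w)"
    using fT X_singleton
    by (intro sum.mono_neutral_right) (auto simp: T_def S_def f_def split: list.split)
  also have "\<dots> = (\<Sum>y\<in>X. P [y] * h y [z])"
    by (subst sum.reindex) (auto simp: inj_on_def f_def)
  finally show ?thesis .
qed

definition Vplus_upto :: "'a set \<Rightarrow> ('a \<Rightarrow> nat) \<Rightarrow> nat \<Rightarrow> 'a set" where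
  "Vplus_upto V lev i = {v \<in> Vplus V lev. lev v \<le> i}"

lemma finite_Vplus: "layered_graph V E lev \<Longrightarrow> finite (Vplus V lev)"
  by (simp add: layered_graph_def Vplus_def)

lemma no_constant_term_if_deg_preserving:
  assumes deg: "\<forall>i. \<forall>p\<in>deg_span V' lev' i. \<exists>q\<in>deg_span V lev i.
                  nc_diff (nc_subst h p) q \<in> R_V V E lev"
    and y: "y \<in> Vplus V' lev'"
  shows "h y [] = 0"
proof -
  have "nc_var y \<in> deg_span V' lev' 1"
    using y by (simp add: deg_span_def nc_in_var) (simp add: nc_var_def)
  then obtain q where q: "q \<in> deg_span V lev 1" "nc_diff (h y) q \<in> R_V V E lev"
    using deg by (force simp: nc_subst_var)
  then have "nc_diff (h y) q [] = 0" by (intro R_V_low_terms) auto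
  moreover have "q [] = 0" using q(1) by (auto simp: deg_span_def)
  ultimately show ?thesis by (simp add: nc_diff_def)
qed

lemma linear_term_supported_if_filt_preserving:
  assumes filt: "\<forall>i. \<forall>p\<in>filt_span V lev i. \<exists>q\<in>filt_span V' lev' i.
                   nc_diff (nc_subst g p) q \<in> R_V V' E' lev'"
    and x: "x \<in> Vplus_upto V lev i" and nz: "g x [y] \<noteq> 0"
  shows "y \<in> Vplus_upto V' lev' i"
proof -
  have "nc_var x \<in> filt_span V lev i"
    using x by (simp add: filt_span_def Vplus_upto_def nc_in_var) (simp add: nc_var_def)
  then obtain q where q: "q \<in> filt_span V' lev' i" "nc_diff (g x) q \<in> R_V V' E' lev'"
    using filt by (force simp: nc_subst_var)
  then have "nc_diff (g x) q [y] = 0" by (intro R_V_low_terms) auto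
  then have "q [y] \<noteq> 0" using nz by (simp add: nc_diff_def)
  then show ?thesis using q(1) by (auto simp: filt_span_def nc_in_def Vplus_upto_def)
qed

lemma linear_terms_inverse:
  assumes fin: "finite (Vplus V' lev')"
    and g: "\<forall>x\<in>Vplus V lev. nc_in (Vplus V' lev') (g x)"
    and hg: "\<forall>p. nc_in (Vplus V lev) p \<longrightarrow> nc_diff (nc_subst h (nc_subst g p)) p \<in> R_V V E lev"
    and h0: "\<forall>y\<in>Vplus V' lev'. h y [] = 0"
    and x: "x \<in> Vplus V lev"
  shows "(\<Sum>y\<in>Vplus V' lev'. g x [y] * h y [z]) = (if x = z then 1 else 0)"
proof -
  have "nc_diff (nc_subst h (g x)) (nc_var x) \<in> R_V V E lev"
    using hg nc_in_var[OF x] by (metis nc_subst_var)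
  then have "nc_diff (nc_subst h (g x)) (nc_var x) [z] = 0" by (rule R_V_low_terms) simp
  then have "nc_subst h (g x) [z] = nc_var x [z]" by (simp add: nc_diff_def)
  moreover have "nc_subst h (g x) [z] = (\<Sum>y\<in>Vplus V' lev'. g x [y] * h y [z])"
    using g x fin h0 by (intro nc_subst_singleton) auto
  ultimately show ?thesis by (simp add: nc_var_def)
qed

lemma card_Vplus_upto_le:
  assumes "layered_graph V E lev" "layered_graph V' E' lev'"
    and g: "\<forall>x\<in>Vplus V lev. nc_in (Vplus V' lev') (g x)"
    and hg: "\<forall>p. nc_in (Vplus V lev) p \<longrightarrow> nc_diff (nc_subst h (nc_subst g p)) p \<in> R_V V E lev"
    and deg: "\<forall>i. \<forall>p\<in>deg_span V' lev' i. \<exists>q\<in>deg_span V lev i.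
                nc_diff (nc_subst h p) q \<in> R_V V E lev"
    and filt: "\<forall>i. \<forall>p\<in>filt_span V lev i. \<exists>q\<in>filt_span V' lev' i.
                 nc_diff (nc_subst g p) q \<in> R_V V' E' lev'"
  shows "card (Vplus_upto V lev i) \<le> card (Vplus_upto V' lev' i)"
proof (rule card_le_of_right_inverse[where C = "\<lambda>x y. g x [y]" and D = "\<lambda>y z. h y [z]"])
  have fin: "finite (Vplus V' lev')" using assms(2) by (rule finite_Vplus)
  then show "finite (Vplus_upto V' lev' i)" by (simp add: Vplus_upto_def)
  show supp: "y \<in> Vplus_upto V' lev' i" if "x \<in> Vplus_upto V lev i" "g x [y] \<noteq> 0" for x y
    using linear_term_supported_if_filt_preserving[OF filt that] .
  fix x z assume x: "x \<in> Vplus_upto V lev i"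
  have h0: "\<forall>y\<in>Vplus V' lev'. h y [] = 0"
    using no_constant_term_if_deg_preserving[OF deg] by blast
  have "(\<Sum>y\<in>Vplus_upto V' lev' i. g x [y] * h y [z]) = (\<Sum>y\<in>Vplus V' lev'. g x [y] * h y [z])"
    using fin supp[OF x] by (intro sum.mono_neutral_left) (auto simp: Vplus_upto_def)
  also have "\<dots> = (if x = z then 1 else 0)"
    using x by (intro linear_terms_inverse[OF fin g hg h0]) (simp add: Vplus_upto_def)
  finally show "(\<Sum>y\<in>Vplus_upto V' lev' i. g x [y] * h y [z]) = (if x = z then 1 else 0)" .
qed

lemma card_Vplus_upto_eq_if_sim_A:
  assumes "layered_graph V E lev" "layered_graph V' E' lev'"
    and "sim_A TYPE('f::field) V E lev V' E' lev'"
  shows "card (Vplus_upto V lev i) = card (Vplus_upto V' lev' i)"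
proof -
  obtain g :: "'a \<Rightarrow> ('b,'f) ncp" and h :: "'b \<Rightarrow> ('a,'f) ncp" where g:
    "\<forall>x\<in>Vplus V lev. nc_in (Vplus V' lev') (g x)"
    "\<forall>x\<in>Vplus V' lev'. nc_in (Vplus V lev) (h x)"
    "\<forall>p. nc_in (Vplus V lev) p \<longrightarrow> nc_diff (nc_subst h (nc_subst g p)) p \<in> R_V V E lev"
    "\<forall>p. nc_in (Vplus V' lev') p \<longrightarrow> nc_diff (nc_subst g (nc_subst h p)) p \<in> R_V V' E' lev'"
    "\<forall>i. \<forall>p\<in>deg_span V lev i. \<exists>q\<in>deg_span V' lev' i. nc_diff (nc_subst g p) q \<in> R_V V' E' lev'"
    "\<forall>i. \<forall>p\<in>deg_span V' lev' i. \<exists>q\<in>deg_span V lev i. nc_diff (nc_subst h p) q \<in> R_V V E lev"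
    "\<forall>i. \<forall>p\<in>filt_span V lev i. \<exists>q\<in>filt_span V' lev' i. nc_diff (nc_subst g p) q \<in> R_V V' E' lev'"
    "\<forall>i. \<forall>p\<in>filt_span V' lev' i. \<exists>q\<in>filt_span V lev i. nc_diff (nc_subst h p) q \<in> R_V V E lev"
    using assms(3) unfolding sim_A_def by blast
  note le = card_Vplus_upto_le[OF assms(1,2)] card_Vplus_upto_le[OF assms(2,1)]
  show ?thesis by (rule antisym) (fact le(1)[OF g(1,3,6,7)], fact le(2)[OF g(2,4,5,8)])
qed

lemma card_level_Suc:
  assumes "finite V"
  shows "card (level V lev (Suc k)) = card (Vplus_upto V lev (Suc k)) - card (Vplus_upto V lev k)"
proof -
  have "level V lev (Suc k) = Vplus_upto V lev (Suc k) - Vplus_upto V lev k"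
    by (auto simp: level_def Vplus_upto_def Vplus_def)
  then show ?thesis
    using assms by (simp add: card_Diff_subset Vplus_upto_def Vplus_def subset_iff)
qed

theorem mainTheorem3:
  fixes V :: "'a set" and E :: "('a \<times> 'a) set" and lev :: "'a \<Rightarrow> nat"
    and V' :: "'b set" and E' :: "('b \<times> 'b) set" and lev' :: "'b \<Rightarrow> nat"
  assumes "layered_graph V E lev" and "unique_min V lev"
    and "layered_graph V' E' lev'" and "unique_min V' lev'"
    and "sim_A TYPE('f::field) V E lev V' E' lev'"
  shows "\<forall>i::nat. card (level V lev i) = card (level V' lev' i)"
proof
  fix i :: nat
  show "card (level V lev i) = card (level V' lev' i)"
  proof (cases i)
    case 0
    then show ?thesis using assms(2,4) by (simp add: unique_min_def)
  next
    case (Suc k)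
    have fin: "finite V" "finite V'" using assms(1,3) by (auto simp: layered_graph_def)
    have "card (level V lev i) = card (Vplus_upto V lev (Suc k)) - card (Vplus_upto V lev k)"
      using Suc card_level_Suc[OF fin(1)] by simp
    also have "\<dots> = card (Vplus_upto V' lev' (Suc k)) - card (Vplus_upto V' lev' k)"
      using card_Vplus_upto_eq_if_sim_A[OF assms(1,3,5)] by simp
    also have "\<dots> = card (level V' lev' i)"
      using Suc card_level_Suc[OF fin(2)] by simp
    finally show ?thesis .
  qed
qed

end
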